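(* For every $\tau\in\mathbb{R}$ and every constant $C$ with $0<C<1/\log 4$, there exists $N_0=N_0(C,\tau)$ such that for all integers $N\ge N_0$, \[ \mathfrak{m}_N(\tau) < \exp\!\left(-C(\log N)^2\right). \]
   Context: For a positive integer $N$ let $\mathcal{S}_N:=\left\{\sum_{n=1}^N \frac{s_n}{n} : s_1,\dots,s_N\in\{-1,+1\}\right\}$, and for $\tau\in\mathbb{R}$ let $\mathfrak{m}_N(\tau):=\min\{|\mathfrak{s}-\tau| : \mathfrak{s}\in\mathcal{S}_N\}$. *)

theory Defs
  imports Complex_Main
begin

definition signed_sums :: "nat \<Rightarrow> real set" where
  "signed_sums N = {(\<Sum>n=1..N. s n / real n) | s. \<forall>n\<in>{1..N}. s n \<in> {-1, 1}}"

definition min_dist :: "nat \<Rightarrow> real \<Rightarrow> real" where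
  "min_dist N \<tau> = Min ((\<lambda>x. \<bar>x - \<tau>\<bar>) ` signed_sums N)"

end

theory Submission
  imports Defs "HOL-Analysis.Harmonic_Numbers" "HOL-Real_Asymp.Real_Asymp"
begin

text \<open>
  The approximation is built greedily. If every point of \<open>[-R, R]\<close> is within \<open>\<delta>\<close> of a signed
  sum over an index set \<open>B\<close>, and \<open>0 \<le> g \<le> R\<close> is a signed sum over indices outside \<open>B\<close>,
  then \<open>[-(R + g), R + g]\<close> is covered in the same way. On level \<open>j\<close> (\<open>1 \<le> j \<le> K\<close>) the
  integers in \<open>[j X, (j + 1) X)\<close> are cut into progressions of \<open>2^j\<close> terms and step \<open>d = 128\<close>,
  signed so that their sum is the \<open>j\<close>-th iterated difference (steps \<open>d, 2d, ..., 2^(j-1) d\<close>) of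
  \<open>1/x\<close> at the first term; by the mean value theorem it is about
  \<open>j! d^j 2^(j(j-1)/2) / x^(j+1)\<close>. All blocks of level \<open>j + 1\<close> together outweigh any single
  block of level \<open>j\<close>, so starting from the finest level \<open>K\<close> the covered radius grows level by
  level; the terms \<open>1/n\<close>, \<open>n < X\<close>, then push it beyond \<open>|\<tau>|\<close>, and the unused indices
  cancel to within \<open>1/X\<close>. The error is the size of a level-\<open>K\<close> block, about
  \<open>K! 128^K 2^(K^2/2) (4/N)^(K+1)\<close>, and \<open>K \<approx> a log\<^sub>2 N\<close> with \<open>a\<close> close to \<open>1\<close> makes this
  smaller than \<open>exp (-C (ln N)^2)\<close> for every \<open>C < 1 / ln 4\<close>.
\<close>

section \<open>Signed sums and coverings\<close>

definition signed_sums_on :: "nat set \<Rightarrow> real set" where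
  "signed_sums_on A = {(\<Sum>n\<in>A. s n / real n) | s. \<forall>n\<in>A. s n \<in> {-1, 1}}"

lemma signed_sums_eq_signed_sums_on: "signed_sums N = signed_sums_on {1..N}"
  unfolding signed_sums_def signed_sums_on_def by simp

lemma zero_in_signed_sums_on_empty: "0 \<in> signed_sums_on {}"
  unfolding signed_sums_on_def by auto

lemma inverse_in_signed_sums_on_singleton: "1 / real n \<in> signed_sums_on {n}"
  unfolding signed_sums_on_def by (rule CollectI, rule exI[of _ "\<lambda>_. 1"]) auto

lemma signed_sums_on_uminus:
  assumes "x \<in> signed_sums_on A"
  shows "- x \<in> signed_sums_on A"
proof -
  obtain s where s: "\<forall>n\<in>A. s n \<in> {-1, 1}" "x = (\<Sum>n\<in>A. s n / real n)"
    using assms unfolding signed_sums_on_def by auto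
  have "- x = (\<Sum>n\<in>A. - s n / real n)"
    using s(2) by (simp add: sum_negf)
  moreover have "\<forall>n\<in>A. - s n \<in> {-1, 1}"
    using s(1) by auto
  ultimately show ?thesis
    unfolding signed_sums_on_def by (intro CollectI exI[of _ "\<lambda>n. - s n"]) auto
qed

lemma signed_sums_on_add:
  assumes "finite A" "finite B" "A \<inter> B = {}"
    and "x \<in> signed_sums_on A" "y \<in> signed_sums_on B"
  shows "x + y \<in> signed_sums_on (A \<union> B)"
proof -
  obtain s where s: "\<forall>n\<in>A. s n \<in> {-1, 1}" "x = (\<Sum>n\<in>A. s n / real n)"
    using assms(4) unfolding signed_sums_on_def by auto
  obtain t where t: "\<forall>n\<in>B. t n \<in> {-1, 1}" "y = (\<Sum>n\<in>B. t n / real n)"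
    using assms(5) unfolding signed_sums_on_def by auto
  define u where "u n = (if n \<in> A then s n else t n)" for n
  have "(\<Sum>n\<in>A \<union> B. u n / real n) = (\<Sum>n\<in>A. u n / real n) + (\<Sum>n\<in>B. u n / real n)"
    using assms(1-3) by (rule sum.union_disjoint)
  also have "\<dots> = x + y"
    unfolding s(2) t(2) u_def using assms(3) by (auto intro!: sum.cong arg_cong2[of _ _ _ _ "(+)"])
  finally have "x + y = (\<Sum>n\<in>A \<union> B. u n / real n)" ..
  moreover have "\<forall>n\<in>A \<union> B. u n \<in> {-1, 1}"
    using s(1) t(1) unfolding u_def by auto
  ultimately show ?thesis
    unfolding signed_sums_on_def by blast
qed

lemma finite_signed_sums_on:
  assumes "finite A"
  shows "finite (signed_sums_on A)"
proof -
  let ?sum = "\<lambda>T. \<Sum>n\<in>A. (if n \<in> T then 1 else -1) / real n"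
  have "signed_sums_on A \<subseteq> ?sum ` Pow A"
  proof
    fix x assume "x \<in> signed_sums_on A"
    then obtain s where s: "\<forall>n\<in>A. s n \<in> {-1, 1}" "x = (\<Sum>n\<in>A. s n / real n)"
      unfolding signed_sums_on_def by auto
    then have "x = ?sum {n\<in>A. s n = 1}"
      by (auto intro!: sum.cong)
    then show "x \<in> ?sum ` Pow A"
      by blast
  qed
  then show ?thesis
    using assms finite_subset by blast
qed

lemma min_dist_le:
  assumes "y \<in> signed_sums_on {1..N}"
  shows "min_dist N \<tau> \<le> \<bar>y - \<tau>\<bar>"
  unfolding min_dist_def signed_sums_eq_signed_sums_on
  using assms finite_signed_sums_on by (intro Min_le) auto

text \<open>Choosing each sign against the sign of the partial sum keeps it within the largest term.\<close>

lemma small_signed_sum: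
  assumes "finite A" "1 \<le> a" "\<And>n. n \<in> A \<Longrightarrow> a \<le> n"
  shows "\<exists>y\<in>signed_sums_on A. \<bar>y\<bar> \<le> 1 / real a"
  using assms(1,3)
proof (induction A rule: finite_induct)
  case empty
  then show ?case
    using zero_in_signed_sums_on_empty by force
next
  case (insert n A)
  then obtain y where y: "y \<in> signed_sums_on A" "\<bar>y\<bar> \<le> 1 / real a"
    by auto
  define e where "e = 1 / real n"
  have e: "0 < e" "e \<le> 1 / real a"
    unfolding e_def using insert.prems[of n] assms(2) by (auto simp: frac_le)
  define z where "z = (if 0 \<le> y then - e else e)"
  have "z \<in> signed_sums_on {n}"
    unfolding z_def e_def using inverse_in_signed_sums_on_singleton signed_sums_on_uminus by simp
  then have "z + y \<in> signed_sums_on (insert n A)"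
    using signed_sums_on_add[of "{n}" A] insert.hyps y(1) by simp
  moreover have "\<bar>z + y\<bar> \<le> 1 / real a"
    using y(2) e unfolding z_def by (auto simp: abs_le_iff)
  ultimately show ?case
    by blast
qed

definition covers :: "nat set \<Rightarrow> real \<Rightarrow> real \<Rightarrow> bool" where
  "covers B R \<delta> \<longleftrightarrow> (\<forall>x. \<bar>x\<bar> \<le> R \<longrightarrow> (\<exists>y\<in>signed_sums_on B. \<bar>x - y\<bar> \<le> \<delta>))"

lemma covers_empty: "covers {} \<delta> \<delta>"
  unfolding covers_def using zero_in_signed_sums_on_empty by force

lemma covers_mono: "covers B R \<delta> \<Longrightarrow> R' \<le> R \<Longrightarrow> covers B R' \<delta>"
  unfolding covers_def by force

lemma covers_add:
  assumes "covers B R \<delta>" "finite A" "finite B" "A \<inter> B = {}"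
    and "g \<in> signed_sums_on A" "0 \<le> g" "g \<le> R"
  shows "covers (A \<union> B) (R + g) \<delta>"
  unfolding covers_def
proof (intro allI impI)
  fix x assume x: "\<bar>x\<bar> \<le> R + g"
  define g' where "g' = (if 0 \<le> x then g else - g)"
  have "\<bar>x - g'\<bar> \<le> R"
    using x assms(6,7) unfolding g'_def by auto
  then obtain y where y: "y \<in> signed_sums_on B" "\<bar>x - g' - y\<bar> \<le> \<delta>"
    using assms(1) unfolding covers_def by blast
  have "g' \<in> signed_sums_on A"
    unfolding g'_def using assms(5) signed_sums_on_uminus by simp
  with assms(2-4) y(1) have "g' + y \<in> signed_sums_on (A \<union> B)"
    by (intro signed_sums_on_add)
  then show "\<exists>y\<in>signed_sums_on (A \<union> B). \<bar>x - y\<bar> \<le> \<delta>"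
    using y(2) by (intro bexI[of _ "g' + y"]) (auto simp: algebra_simps)
qed

lemma covers_UN:
  assumes "finite I" "covers B R \<delta>" "finite B"
    and "\<And>i. i \<in> I \<Longrightarrow> finite (A i)"
    and "\<And>i. i \<in> I \<Longrightarrow> A i \<inter> B = {}"
    and "\<And>i j. i \<in> I \<Longrightarrow> j \<in> I \<Longrightarrow> i \<noteq> j \<Longrightarrow> A i \<inter> A j = {}"
    and "\<And>i. i \<in> I \<Longrightarrow> g i \<in> signed_sums_on (A i)"
    and "\<And>i. i \<in> I \<Longrightarrow> 0 \<le> g i \<and> g i \<le> R"
  shows "covers (B \<union> (\<Union>i\<in>I. A i)) (R + (\<Sum>i\<in>I. g i)) \<delta>"
  using assms(1,4-8)
proof (induction I rule: finite_induct)
  case empty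
  then show ?case
    using assms(2) by simp
next
  case (insert i I)
  have "covers (A i \<union> (B \<union> (\<Union>j\<in>I. A j))) ((R + (\<Sum>j\<in>I. g j)) + g i) \<delta>"
  proof (rule covers_add)
    show "covers (B \<union> (\<Union>j\<in>I. A j)) (R + (\<Sum>j\<in>I. g j)) \<delta>"
      using insert by auto
    show "A i \<inter> (B \<union> (\<Union>j\<in>I. A j)) = {}"
      using insert.prems(2,3)[of i] insert.hyps(2) by fastforce
    have "0 \<le> (\<Sum>j\<in>I. g j)"
      using insert.prems(5) by (intro sum_nonneg) auto
    then show "g i \<le> R + (\<Sum>j\<in>I. g j)"
      using insert.prems(5)[of i] by auto
  qed (use insert assms(3) in auto)
  moreover have "(R + (\<Sum>j\<in>I. g j)) + g i = R + (\<Sum>j\<in>insert i I. g j)"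
    using insert.hyps by simp
  ultimately show ?case
    by (simp add: Un_left_commute)
qed

text \<open>The terms \<open>1/n\<close> are added from the smallest one on: each of them is at most twice the
  next smaller one, hence at most the radius covered so far.\<close>

lemma covers_harm:
  assumes "covers B R \<delta>" "finite B" "B \<inter> {1..M} = {}" "1 \<le> M" "1 / real M \<le> R"
  shows "covers (B \<union> {1..M}) (R + harm M) \<delta>"
proof -
  let ?R = "\<lambda>k. R + (\<Sum>n=k..M. 1 / real n)"
  have "covers (B \<union> {k..M}) (?R k) \<delta> \<and> 2 / real k \<le> ?R k" if "1 \<le> k" "k \<le> M" for k
    using that(2,1)
  proof (induction k rule: inc_induct)
    case base
    have "covers ({M} \<union> B) (R + 1 / real M) \<delta>"
      by (rule covers_add[OF assms(1)]) (use assms inverse_in_signed_sums_on_singleton in auto)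
    then show ?case
      using assms(5) by (simp add: Un_commute)
  next
    case (step k)
    have split: "{k..M} = insert k {Suc k..M}"
      using step.hyps by auto
    have "1 / real k \<le> 2 / real (Suc k)"
      using step.prems by (simp add: field_simps)
    then have fits: "1 / real k \<le> ?R (Suc k)"
      using step.IH by simp
    have cov: "covers ({k} \<union> (B \<union> {Suc k..M})) (?R (Suc k) + 1 / real k) \<delta>"
      by (rule covers_add[OF step.IH[THEN conjunct1]])
        (use assms(2,3) step fits inverse_in_signed_sums_on_singleton in auto)
    have sets: "B \<union> {k..M} = {k} \<union> (B \<union> {Suc k..M})"
      unfolding split by auto
    have radius: "?R k = ?R (Suc k) + 1 / real k"
      unfolding split by simp
    show ?case
      unfolding sets radius using cov fits by simp
  qed
  then have "covers (B \<union> {1..M}) (R + (\<Sum>n=1..M. 1 / real n)) \<delta>"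
    using assms(4) by blast
  moreover have "harm M = (\<Sum>n=1..M. 1 / real n)"
    by (simp add: harm_def inverse_eq_divide)
  ultimately show ?thesis
    by (simp only:)
qed

lemma min_dist_le_of_covers:
  assumes "covers S R \<delta>" "S \<subseteq> {1..N}" "1 \<le> a" "\<And>n. n \<in> {1..N} - S \<Longrightarrow> a \<le> n"
    and "\<bar>\<tau>\<bar> + 1 / real a \<le> R"
  shows "min_dist N \<tau> \<le> \<delta>"
proof -
  obtain z where z: "z \<in> signed_sums_on ({1..N} - S)" "\<bar>z\<bar> \<le> 1 / real a"
    using small_signed_sum[OF finite_Diff[OF finite_atLeastAtMost] assms(3,4)] by blast
  then have "\<bar>\<tau> - z\<bar> \<le> R"
    using assms(5) abs_triangle_ineq4[of \<tau> z] by linarith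
  then obtain y where y: "y \<in> signed_sums_on S" "\<bar>\<tau> - z - y\<bar> \<le> \<delta>"
    using assms(1) unfolding covers_def by blast
  have "finite S"
    using assms(2) finite_subset by blast
  then have "y + z \<in> signed_sums_on (S \<union> ({1..N} - S))"
    using y(1) z(1) by (intro signed_sums_on_add) auto
  moreover have "S \<union> ({1..N} - S) = {1..N}"
    using assms(2) by auto
  ultimately have "min_dist N \<tau> \<le> \<bar>y + z - \<tau>\<bar>"
    by (metis min_dist_le)
  also have "\<dots> = \<bar>\<tau> - z - y\<bar>"
    by (metis abs_minus_commute diff_diff_eq add.commute)
  finally show ?thesis
    using y(2) by linarith
qed

section \<open>Iterated differences of inverse powers\<close>

text \<open>For \<open>p = 1\<close> the iterated difference is a signed sum of the \<open>1/(x + h t)\<close>, \<open>t < 2^k\<close>.\<close>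

fun inv_pow_diff :: "real \<Rightarrow> nat \<Rightarrow> nat \<Rightarrow> real \<Rightarrow> real" where
  "inv_pow_diff h 0 p x = 1 / x ^ p"
| "inv_pow_diff h (Suc k) p x = inv_pow_diff h k p x - inv_pow_diff h k p (x + h * 2 ^ k)"

lemma has_real_derivative_inv_pow_diff:
  assumes "0 < h" "0 < x"
  shows "(inv_pow_diff h k p has_real_derivative - real p * inv_pow_diff h k (Suc p) x) (at x)"
  using assms(2)
proof (induction k arbitrary: p x)
  case 0
  have "((\<lambda>x. x ^ p) has_real_derivative real p * x ^ (p - 1)) (at x)"
    using DERIV_pow[of p x] by simp
  then have "((\<lambda>x. inverse (x ^ p)) has_real_derivative
      - (inverse (x ^ p) * (real p * x ^ (p - 1)) * inverse (x ^ p))) (at x)"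
    by (rule DERIV_inverse') (use 0 in simp)
  moreover have "- (inverse (x ^ p) * (real p * x ^ (p - 1)) * inverse (x ^ p))
      = - real p * (1 / x ^ Suc p)"
    using 0 by (cases p) (simp_all add: field_simps)
  ultimately show ?case
    by (simp add: inverse_eq_divide)
next
  case (Suc k)
  let ?s = "h * 2 ^ k"
  have "(inv_pow_diff h k p has_real_derivative - real p * inv_pow_diff h k (Suc p) (x + ?s))
      (at (x + ?s))"
    using Suc.prems assms(1) by (intro Suc.IH add_pos_pos mult_pos_pos) auto
  then have "((\<lambda>y. inv_pow_diff h k p (y + ?s)) has_real_derivative
      - real p * inv_pow_diff h k (Suc p) (x + ?s)) (at x)"
    by (simp add: DERIV_shift)
  from DERIV_diff[OF Suc.IH[OF Suc.prems] this] show ?case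
    by (simp add: algebra_simps)
qed

lemma inv_pow_diff_Suc_mean_value:
  assumes "0 < h" "0 < x"
  obtains z where "x < z" "z < x + h * 2 ^ k"
    "inv_pow_diff h (Suc k) p x = h * 2 ^ k * real p * inv_pow_diff h k (Suc p) z"
proof -
  have deriv: "\<And>y. x \<le> y \<Longrightarrow>
      (inv_pow_diff h k p has_real_derivative - real p * inv_pow_diff h k (Suc p) y) (at y)"
    using assms by (intro has_real_derivative_inv_pow_diff) auto
  obtain z where "x < z" "z < x + h * 2 ^ k"
    "inv_pow_diff h k p (x + h * 2 ^ k) - inv_pow_diff h k p x
      = (x + h * 2 ^ k - x) * (- real p * inv_pow_diff h k (Suc p) z)"
    using MVT2[of x "x + h * 2 ^ k", OF _ deriv] assms by auto
  then show thesis
    by (intro that) (auto simp: algebra_simps)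
qed

definition inv_pow_diff_coeff :: "real \<Rightarrow> nat \<Rightarrow> nat \<Rightarrow> real" where
  "inv_pow_diff_coeff h k p = h ^ k * 2 ^ (\<Sum>{..<k}) * pochhammer (real p) k"

lemma inv_pow_diff_coeff_Suc:
  "inv_pow_diff_coeff h (Suc k) p = h * 2 ^ k * real p * inv_pow_diff_coeff h k (Suc p)"
  unfolding inv_pow_diff_coeff_def by (simp add: pochhammer_rec power_add algebra_simps)

lemma inv_pow_diff_coeff_nonneg: "0 \<le> h \<Longrightarrow> 0 \<le> inv_pow_diff_coeff h k p"
  unfolding inv_pow_diff_coeff_def by (cases "p = 0") (simp_all add: pochhammer_0_left pochhammer_nonneg)

lemma inv_pow_diff_coeff_Suc_one:
  "inv_pow_diff_coeff h (Suc k) 1 = h * 2 ^ k * real (Suc k) * inv_pow_diff_coeff h k 1"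
proof -
  have "pochhammer (2::real) k = pochhammer 1 (Suc k)"
    by (simp add: pochhammer_rec)
  also have "\<dots> = real (Suc k) * pochhammer 1 k"
    by (simp add: pochhammer_rec' add.commute)
  finally show ?thesis
    unfolding inv_pow_diff_coeff_Suc by (simp add: inv_pow_diff_coeff_def numeral_2_eq_2)
qed

text \<open>Iterating the mean value theorem, the \<open>k\<close>-th difference is the product of the steps times
  \<open>p (p + 1) ... (p + k - 1) / z^(p + k)\<close> for some \<open>z\<close> in \<open>[x, x + h (2^k - 1)]\<close>.\<close>

lemma inv_pow_diff_bounds:
  assumes "0 < h" "0 < x"
  shows "inv_pow_diff_coeff h k p / (x + h * (2 ^ k - 1)) ^ (p + k) \<le> inv_pow_diff h k p x"
    and "inv_pow_diff h k p x \<le> inv_pow_diff_coeff h k p / x ^ (p + k)"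
proof -
  have "inv_pow_diff_coeff h k p / (x + h * (2 ^ k - 1)) ^ (p + k) \<le> inv_pow_diff h k p x
      \<and> inv_pow_diff h k p x \<le> inv_pow_diff_coeff h k p / x ^ (p + k)"
    using assms(2)
  proof (induction k arbitrary: p x)
    case 0
    then show ?case
      by (simp add: inv_pow_diff_coeff_def)
  next
    case (Suc k)
    let ?c = "inv_pow_diff_coeff h k (Suc p)"
    let ?w = "h * 2 ^ k * real p"
    obtain z where z: "x < z" "z < x + h * 2 ^ k"
      and eq: "inv_pow_diff h (Suc k) p x = ?w * inv_pow_diff h k (Suc p) z"
      using inv_pow_diff_Suc_mean_value[OF assms(1) Suc.prems] by blast
    have IH: "?c / (z + h * (2 ^ k - 1)) ^ (Suc p + k) \<le> inv_pow_diff h k (Suc p) z"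
      "inv_pow_diff h k (Suc p) z \<le> ?c / z ^ (Suc p + k)"
      using Suc.IH[of z "Suc p"] Suc.prems z by auto
    have "(1::real) \<le> 2 ^ k"
      by simp
    then have "0 < z + h * (2 ^ k - 1)"
      using Suc.prems z assms(1) by (intro add_pos_nonneg) auto
    moreover have "z + h * (2 ^ k - 1) \<le> x + h * (2 ^ Suc k - 1)"
      using z(2) by (simp add: algebra_simps)
    ultimately have lower: "?c / (x + h * (2 ^ Suc k - 1)) ^ (Suc p + k)
        \<le> ?c / (z + h * (2 ^ k - 1)) ^ (Suc p + k)"
      using assms(1) by (intro divide_left_mono power_mono inv_pow_diff_coeff_nonneg) auto
    have upper: "?c / z ^ (Suc p + k) \<le> ?c / x ^ (Suc p + k)"
      using Suc.prems z assms(1) by (intro divide_left_mono power_mono inv_pow_diff_coeff_nonneg) auto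
    have "0 \<le> ?w"
      using assms(1) by simp
    from mult_left_mono[OF order_trans[OF lower IH(1)] this]
      mult_left_mono[OF order_trans[OF IH(2) upper] this]
    show ?case
      unfolding eq inv_pow_diff_coeff_Suc by (simp add: mult.assoc)
  qed
  then show "inv_pow_diff_coeff h k p / (x + h * (2 ^ k - 1)) ^ (p + k) \<le> inv_pow_diff h k p x"
    and "inv_pow_diff h k p x \<le> inv_pow_diff_coeff h k p / x ^ (p + k)"
    by auto
qed

definition dyadic_progression :: "nat \<Rightarrow> nat \<Rightarrow> nat \<Rightarrow> nat set" where
  "dyadic_progression d k n = (\<lambda>t. n + d * t) ` {..<2 ^ k}"

lemma finite_dyadic_progression: "finite (dyadic_progression d k n)"
  unfolding dyadic_progression_def by simp

lemma dyadic_progression_Suc: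
  "dyadic_progression d (Suc k) n = dyadic_progression d k n \<union> dyadic_progression d k (n + d * 2 ^ k)"
proof -
  have "t \<in> {..<2 ^ k} \<union> (\<lambda>t. 2 ^ k + t) ` {..<2 ^ k}" if "t < 2 ^ Suc k" for t :: nat
  proof (cases "t < 2 ^ k")
    case False
    then have "t = 2 ^ k + (t - 2 ^ k)" "t - 2 ^ k < 2 ^ k"
      using that by auto
    then show ?thesis
      by blast
  qed simp
  then have "{..<2 ^ Suc k} = {..<2 ^ k} \<union> (\<lambda>t. 2 ^ k + t) ` {..<(2::nat) ^ k}"
    by auto
  then show ?thesis
    unfolding dyadic_progression_def by (auto simp: image_Un image_image algebra_simps)
qed

lemma dyadic_progression_halves_disjoint:
  "0 < d \<Longrightarrow> dyadic_progression d k n \<inter> dyadic_progression d k (n + d * 2 ^ k) = {}"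
  unfolding dyadic_progression_def by (auto simp flip: distrib_left)

lemma inv_pow_diff_in_signed_sums_on:
  assumes "0 < d"
  shows "inv_pow_diff (real d) k 1 (real n) \<in> signed_sums_on (dyadic_progression d k n)"
proof (induction k arbitrary: n)
  case 0
  then show ?case
    using inverse_in_signed_sums_on_singleton by (simp add: dyadic_progression_def lessThan_Suc)
next
  case (Suc k)
  have "inv_pow_diff (real d) k 1 (real n) + - inv_pow_diff (real d) k 1 (real (n + d * 2 ^ k))
      \<in> signed_sums_on (dyadic_progression d (Suc k) n)"
    unfolding dyadic_progression_Suc using assms
    by (intro signed_sums_on_add finite_dyadic_progression dyadic_progression_halves_disjoint
        Suc.IH signed_sums_on_uminus)
  then show ?case
    by simp
qed

section \<open>The dyadic layout\<close>

lemma mult_add_less_mult: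
  fixes a b r d :: nat
  assumes "a < b" "r < d"
  shows "d * a + r < d * b"
proof -
  have "d * a + r < d * Suc a"
    using assms(2) by simp
  also have "\<dots> \<le> d * b"
    using assms(1) by (intro mult_le_mono2) simp
  finally show ?thesis .
qed

lemma mult_add_eq_mult_add_iff:
  fixes a a' r r' d :: nat
  assumes "r < d" "r' < d"
  shows "d * a + r = d * a' + r' \<longleftrightarrow> a = a' \<and> r = r'"
proof
  assume eq: "d * a + r = d * a' + r'"
  have "(d * a + r) div d = a" "(d * a + r) mod d = r"
    "(d * a' + r') div d = a'" "(d * a' + r') mod d = r'"
    using assms by auto
  then show "a = a' \<and> r = r'"
    using eq by metis
qed simp

lemma two_shifted_power_le:
  assumes "1 \<le> j"
  shows "2 * real (j + 2) ^ (j + 2) \<le> 128 * real (j + 1) * real j ^ (j + 1)"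
proof -
  have j: "1 \<le> real j"
    using assms by simp
  have "(1 + 2 / real j) ^ j \<le> exp 2"
    using exp_ge_one_plus_x_over_n_power_n[of j 2] assms by simp
  also have "\<dots> = exp 1 * exp 1"
    by (simp flip: exp_add)
  also have "\<dots> \<le> 3 * 3"
    using exp_le by (intro mult_mono) auto
  also have "(1 + 2 / real j) ^ j = real (j + 2) ^ j / real j ^ j"
    using j by (simp add: field_simps power_divide)
  finally have base: "real (j + 2) ^ j \<le> 9 * real j ^ j"
    using j by (simp add: field_simps)
  have "1 \<le> real j * real j"
    using mult_mono[OF j j] by simp
  then have square: "18 * real (j + 2) ^ 2 \<le> 128 * (real j * real (j + 1))"
    using j by (simp add: power2_eq_square algebra_simps)
  have "2 * real (j + 2) ^ (j + 2) = 2 * (real (j + 2) ^ j * real (j + 2) ^ 2)"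
    by (simp only: power_add)
  also have "\<dots> \<le> 2 * (9 * real j ^ j * real (j + 2) ^ 2)"
    using base by (intro mult_left_mono mult_right_mono) auto
  also have "\<dots> = real j ^ j * (18 * real (j + 2) ^ 2)"
    by simp
  also have "\<dots> \<le> real j ^ j * (128 * (real j * real (j + 1)))"
    using square by (intro mult_left_mono) auto
  also have "\<dots> = 128 * real (j + 1) * real j ^ (j + 1)"
    by (simp add: algebra_simps)
  finally show ?thesis .
qed

text \<open>Level \<open>j\<close> occupies \<open>[j * width, (j + 1) * width)\<close>; a slot \<open>(q, r)\<close> of level \<open>j\<close> is the
  progression with step \<open>d\<close> and \<open>2^j\<close> terms starting at \<open>j * width + q d 2^j + r\<close>, and these
  progressions partition the level.\<close>

locale dyadic_layout =
  fixes K m d :: nat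
  assumes K_pos: "1 \<le> K" and m_pos: "1 \<le> m" and d_ge: "128 \<le> d"
begin

definition width :: nat where
  "width = d * 2 ^ K * m"

definition slots :: "nat \<Rightarrow> (nat \<times> nat) set" where
  "slots j = {..<m * 2 ^ (K - j)} \<times> {..<d}"

definition start :: "nat \<Rightarrow> nat \<times> nat \<Rightarrow> nat" where
  "start j i = j * width + fst i * (d * 2 ^ j) + snd i"

definition block :: "nat \<Rightarrow> nat \<times> nat \<Rightarrow> nat set" where
  "block j i = dyadic_progression d j (start j i)"

definition block_value :: "nat \<Rightarrow> nat \<times> nat \<Rightarrow> real" where
  "block_value j i = inv_pow_diff (real d) j 1 (real (start j i))"

definition level :: "nat \<Rightarrow> nat set" where
  "level j = (\<Union>i\<in>slots j. block j i)"

definition levels_from :: "nat \<Rightarrow> nat set" where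
  "levels_from j = (\<Union>l\<in>{j..K}. level l)"

definition block_upper :: "nat \<Rightarrow> real" where
  "block_upper j = inv_pow_diff_coeff d j 1 / (real j * real width) ^ (j + 1)"

definition block_lower :: "nat \<Rightarrow> real" where
  "block_lower j = inv_pow_diff_coeff d j 1 / (real (Suc j) * real width) ^ (j + 1)"

lemma d_pos: "0 < d"
  using d_ge by simp

lemma width_ge_2: "2 \<le> width"
proof -
  have "1 \<le> 2 ^ K * m"
    using m_pos by simp
  with d_ge have "128 * 1 \<le> d * (2 ^ K * m)"
    by (rule mult_le_mono)
  then show ?thesis
    unfolding width_def by (simp add: mult.assoc)
qed

lemma two_pow_diff_mult: "j \<le> K \<Longrightarrow> 2 ^ (K - j) * 2 ^ j = (2::nat) ^ K"
  by (simp flip: power_add)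

lemma card_slots_mult:
  assumes "j \<le> K"
  shows "card (slots j) * 2 ^ j = width"
proof -
  have "card (slots j) * 2 ^ j = d * (2 ^ (K - j) * 2 ^ j) * m"
    unfolding slots_def by (simp add: card_cartesian_product)
  then show ?thesis
    unfolding width_def two_pow_diff_mult[OF assms] .
qed

lemma finite_slots: "finite (slots j)"
  unfolding slots_def by simp

lemma mem_block:
  "e \<in> block j (q, r) \<longleftrightarrow> (\<exists>t<2 ^ j. e = j * width + (d * (2 ^ j * q + t) + r))"
  unfolding block_def dyadic_progression_def start_def by (auto simp: algebra_simps)

lemma block_subset:
  assumes "j \<le> K" "i \<in> slots j"
  shows "block j i \<subseteq> {j * width..<Suc j * width}"
proof
  fix e assume e: "e \<in> block j i"
  obtain q r where i: "i = (q, r)" "q < m * 2 ^ (K - j)" "r < d"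
    using assms(2) unfolding slots_def by auto
  obtain t where t: "t < 2 ^ j" "e = j * width + (d * (2 ^ j * q + t) + r)"
    using e unfolding i mem_block by auto
  have "2 ^ j * q + t < 2 ^ j * (m * 2 ^ (K - j))"
    using i(2) t(1) by (rule mult_add_less_mult)
  also have "\<dots> = m * 2 ^ K"
    using two_pow_diff_mult[OF assms(1)] by (metis mult.commute mult.left_commute)
  finally have "d * (2 ^ j * q + t) + r < d * (m * 2 ^ K)"
    using i(3) by (rule mult_add_less_mult)
  then have "d * (2 ^ j * q + t) + r < width"
    unfolding width_def by (simp add: mult_ac)
  then show "e \<in> {j * width..<Suc j * width}"
    unfolding t(2) by simp
qed

lemma blocks_disjoint:
  assumes "i \<in> slots j" "i' \<in> slots j" "i \<noteq> i'"
  shows "block j i \<inter> block j i' = {}"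
proof (rule ccontr)
  assume "block j i \<inter> block j i' \<noteq> {}"
  then obtain e where e: "e \<in> block j i" "e \<in> block j i'"
    by blast
  obtain q r q' r' where i: "i = (q, r)" "i' = (q', r')" "r < d" "r' < d"
    using assms(1,2) unfolding slots_def by auto
  obtain t where t: "t < 2 ^ j" "e = j * width + (d * (2 ^ j * q + t) + r)"
    using e(1) unfolding i(1) mem_block by blast
  obtain t' where t': "t' < 2 ^ j" "e = j * width + (d * (2 ^ j * q' + t') + r')"
    using e(2) unfolding i(2) mem_block by blast
  have "d * (2 ^ j * q + t) + r = d * (2 ^ j * q' + t') + r'"
    using t(2) t'(2) by simp
  then have "2 ^ j * q + t = 2 ^ j * q' + t'" "r = r'"
    using i(3,4) mult_add_eq_mult_add_iff by blast+
  then have "q = q'" "r = r'"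
    using t(1) t'(1) mult_add_eq_mult_add_iff by blast+
  then show False
    using assms(3) i(1,2) by simp
qed

lemma finite_level: "finite (level j)"
  unfolding level_def slots_def block_def by (simp add: finite_dyadic_progression)

lemma level_subset: "j \<le> K \<Longrightarrow> level j \<subseteq> {j * width..<Suc j * width}"
  unfolding level_def using block_subset by blast

lemma finite_levels_from: "finite (levels_from j)"
  unfolding levels_from_def using finite_level by simp

lemma levels_from_subset: "levels_from j \<subseteq> {j * width..<Suc K * width}"
proof
  fix e assume "e \<in> levels_from j"
  then obtain l where l: "j \<le> l" "l \<le> K" "e \<in> level l"
    unfolding levels_from_def by auto
  then have "l * width \<le> e" "e < Suc l * width"
    using level_subset[OF l(2)] by auto
  moreover have "j * width \<le> l * width" "Suc l * width \<le> Suc K * width"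
    using l(1,2) by (auto intro: mult_le_mono1)
  ultimately have "j * width \<le> e" "e < Suc K * width"
    by linarith+
  then show "e \<in> {j * width..<Suc K * width}"
    by simp
qed

lemma levels_from_Suc_K: "levels_from (Suc K) = {}"
  unfolding levels_from_def by simp

lemma levels_from_eq:
  assumes "j \<le> K"
  shows "levels_from j = levels_from (Suc j) \<union> level j"
proof -
  have "{j..K} = insert j {Suc j..K}"
    using assms by auto
  then show ?thesis
    unfolding levels_from_def by auto
qed

lemma level_disjoint_levels_from_Suc:
  "j \<le> K \<Longrightarrow> levels_from (Suc j) \<inter> level j = {}"
  using level_subset[of j] levels_from_subset[of "Suc j"] by fastforce

lemma block_value_in_signed_sums_on: "block_value j i \<in> signed_sums_on (block j i)"
  unfolding block_value_def block_def using d_pos by (rule inv_pow_diff_in_signed_sums_on)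

lemma block_ends:
  assumes "j \<le> K" "i \<in> slots j"
  shows "j * width \<le> start j i" "start j i + d * (2 ^ j - 1) < Suc j * width"
proof -
  have "start j i \<in> block j i" "start j i + d * (2 ^ j - 1) \<in> block j i"
    unfolding block_def dyadic_progression_def by force+
  then show "j * width \<le> start j i" "start j i + d * (2 ^ j - 1) < Suc j * width"
    using block_subset[OF assms] by auto
qed

lemma block_value_bounds:
  assumes "1 \<le> j" "j \<le> K" "i \<in> slots j"
  shows "block_lower j \<le> block_value j i" "block_value j i \<le> block_upper j"
proof -
  let ?s = "start j i"
  note first = block_ends(1)[OF assms(2,3)] and last = block_ends(2)[OF assms(2,3)]
  have "0 < j * width"
    using assms(1) width_ge_2 by simp
  then have pos: "0 < real j * real width"
    by simp
  have "0 < ?s"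
    using first \<open>0 < j * width\<close> by linarith
  then have s: "0 < real ?s" "real j * real width \<le> real ?s"
    using first of_nat_le_iff[of "j * width" ?s, where 'a=real] by simp_all
  have "real ?s + real d * (2 ^ j - 1) = real (?s + d * (2 ^ j - 1))"
    by (simp add: of_nat_diff)
  also have "\<dots> \<le> real (Suc j * width)"
    using last by (simp only: of_nat_le_iff)
  also have "\<dots> = real (Suc j) * real width"
    by (rule of_nat_mult)
  finally have "real ?s + real d * (2 ^ j - 1) \<le> real (Suc j) * real width" .
  then have "block_lower j \<le> inv_pow_diff_coeff d j 1 / (real ?s + real d * (2 ^ j - 1)) ^ (1 + j)"
    unfolding block_lower_def add.commute[of j 1] using s width_ge_2
    by (intro divide_left_mono power_mono inv_pow_diff_coeff_nonneg mult_pos_pos zero_less_power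
        add_pos_nonneg) auto
  also have "\<dots> \<le> block_value j i"
    unfolding block_value_def using d_pos s by (intro inv_pow_diff_bounds) auto
  finally show "block_lower j \<le> block_value j i" .
  have "block_value j i \<le> inv_pow_diff_coeff d j 1 / real ?s ^ (1 + j)"
    unfolding block_value_def using d_pos s by (intro inv_pow_diff_bounds) auto
  also have "\<dots> \<le> block_upper j"
  proof -
    have le: "(real j * real width) ^ (1 + j) \<le> real ?s ^ (1 + j)"
      using s pos by (intro power_mono) auto
    have "0 < real ?s ^ (1 + j) * (real j * real width) ^ (1 + j)"
      using s pos by simp
    from divide_left_mono[OF le inv_pow_diff_coeff_nonneg this] show ?thesis
      unfolding block_upper_def add.commute[of j 1] by simp
  qed
  finally show "block_value j i \<le> block_upper j" .
qed

lemma block_lower_nonneg: "0 \<le> block_lower j"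
  unfolding block_lower_def by (intro divide_nonneg_nonneg inv_pow_diff_coeff_nonneg) auto

lemma block_upper_nonneg: "0 \<le> block_upper j"
  unfolding block_upper_def by (intro divide_nonneg_nonneg inv_pow_diff_coeff_nonneg) auto

lemma level_condition:
  assumes "1 \<le> j" "j < K"
  shows "block_upper j \<le> real (card (slots (Suc j))) * block_lower (Suc j)"
proof -
  define B where "B = inv_pow_diff_coeff d j 1"
  define W where "W = real width"
  define V where "V = W ^ (j + 1)"
  define c where "c = real (card (slots (Suc j)))"
  define p where "p = real (j + 2) ^ (j + 2)"
  define x where "x = real d * real (j + 1)"
  have W: "0 < W" and V: "0 < V" and p: "0 < p"
    unfolding W_def V_def p_def using width_ge_2 by simp_all
  have B: "0 \<le> B"
    unfolding B_def by (rule inv_pow_diff_coeff_nonneg) simp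
  have "c * 2 ^ Suc j = W"
    unfolding c_def W_def using card_slots_mult[of "Suc j"] assms(2)
    by (metis Suc_leI of_nat_mult of_nat_numeral of_nat_power)
  then have c: "c * 2 ^ j = W / 2"
    by simp
  have "c * block_lower (Suc j) = (c * 2 ^ j) * (x * B) / (p * (W * V))"
    unfolding block_lower_def inv_pow_diff_coeff_Suc_one B_def W_def V_def x_def p_def
    by (simp add: power_mult_distrib ac_simps)
  also have "\<dots> = B / V * (x / (2 * p))"
    unfolding c using W V p by (simp add: field_simps)
  finally have lower: "c * block_lower (Suc j) = B / V * (x / (2 * p))" .
  have upper: "block_upper j = B / V * (1 / real j ^ (j + 1))"
    unfolding block_upper_def B_def V_def W_def by (simp add: power_mult_distrib)
  have "2 * real (j + 2) ^ (j + 2) \<le> 128 * real (j + 1) * real j ^ (j + 1)"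
    using assms(1) by (rule two_shifted_power_le)
  also have "\<dots> \<le> real d * real (j + 1) * real j ^ (j + 1)"
    using d_ge by (intro mult_right_mono) auto
  finally have "2 * p \<le> x * real j ^ (j + 1)"
    unfolding p_def x_def .
  moreover have "0 < real j ^ (j + 1)"
    using assms(1) by simp
  ultimately have "1 / real j ^ (j + 1) \<le> x / (2 * p)"
    using p by (simp add: field_simps)
  then show ?thesis
    unfolding c_def[symmetric] lower upper using B V by (intro mult_left_mono) auto
qed

lemma covers_add_level:
  assumes "covers B R \<delta>" "finite B" "B \<inter> level j = {}" "1 \<le> j" "j \<le> K" "block_upper j \<le> R"
  shows "covers (B \<union> level j) (real (card (slots j)) * block_lower j) \<delta>"
proof -
  have cov: "covers (B \<union> level j) (R + (\<Sum>i\<in>slots j. block_value j i)) \<delta>"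
    unfolding level_def
  proof (rule covers_UN[OF finite_slots assms(1,2)])
    fix i assume i: "i \<in> slots j"
    show "finite (block j i)"
      unfolding block_def by (rule finite_dyadic_progression)
    show "block j i \<inter> B = {}"
      using assms(3) i unfolding level_def by blast
    show "block_value j i \<in> signed_sums_on (block j i)"
      by (rule block_value_in_signed_sums_on)
    show "0 \<le> block_value j i \<and> block_value j i \<le> R"
      using block_value_bounds[OF assms(4,5) i] block_lower_nonneg[of j] assms(6) by auto
  next
    fix i i' assume "i \<in> slots j" "i' \<in> slots j" "i \<noteq> i'"
    then show "block j i \<inter> block j i' = {}"
      by (rule blocks_disjoint)
  qed
  have "real (card (slots j)) * block_lower j \<le> (\<Sum>i\<in>slots j. block_value j i)"
    by (rule sum_bounded_below) (rule block_value_bounds(1)[OF assms(4,5)])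
  moreover have "0 \<le> R"
    using block_upper_nonneg[of j] assms(6) by linarith
  ultimately show ?thesis
    by (intro covers_mono[OF cov]) linarith
qed

lemma covers_levels_from:
  assumes "1 \<le> j" "j \<le> K"
  shows "covers (levels_from j) (real (card (slots j)) * block_lower j) (block_upper K)"
  using assms(2,1)
proof (induction j rule: inc_induct)
  case base
  have "covers ({} \<union> level K) (real (card (slots K)) * block_lower K) (block_upper K)"
    by (rule covers_add_level[OF covers_empty]) (use K_pos in auto)
  then show ?case
    using levels_from_eq[of K] levels_from_Suc_K by simp
next
  case (step j)
  have "block_upper j \<le> real (card (slots (Suc j))) * block_lower (Suc j)"
    using step by (intro level_condition) auto
  then have "covers (levels_from (Suc j) \<union> level j) (real (card (slots j)) * block_lower j)
      (block_upper K)"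
    using step by (intro covers_add_level[OF step.IH] finite_levels_from
        level_disjoint_levels_from_Suc) auto
  then show ?case
    using levels_from_eq[of j] step.hyps by simp
qed

lemma min_dist_le_block_upper:
  assumes "Suc K * width \<le> N" "\<bar>\<tau>\<bar> + 1 \<le> harm (width - 1)"
  shows "min_dist N \<tau> \<le> block_upper K"
proof -
  let ?R = "real (card (slots 1)) * block_lower 1"
  let ?S = "levels_from 1 \<union> {1..width - 1}"
  have W: "2 \<le> real width"
    using width_ge_2 by simp
  have "real (card (slots 1)) * 2 = real width"
    using card_slots_mult[of 1] K_pos by (metis of_nat_mult of_nat_numeral power_one_right)
  then have R: "?R = real d / (8 * real width)"
    unfolding block_lower_def inv_pow_diff_coeff_def using W
    by (simp add: field_simps power2_eq_square)
  have "8 * real width \<le> 128 * (real width - 1)"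
    using W by simp
  also have "\<dots> \<le> real d * (real width - 1)"
    using W d_ge by (intro mult_right_mono) auto
  finally have "1 / real (width - 1) \<le> ?R"
    unfolding R using W width_ge_2 by (simp add: field_simps of_nat_diff)
  moreover have "levels_from 1 \<inter> {1..width - 1} = {}"
    using levels_from_subset[of 1] by fastforce
  ultimately have cov: "covers ?S (?R + harm (width - 1)) (block_upper K)"
    using covers_levels_from[of 1] K_pos finite_levels_from width_ge_2
    by (intro covers_harm) auto
  show ?thesis
  proof (rule min_dist_le_of_covers[OF cov])
    have "width \<le> N"
      using assms(1) by (metis le_trans mult_le_mono1 mult_1 le_add1 plus_1_eq_Suc)
    then show "?S \<subseteq> {1..N}"
      using levels_from_subset[of 1] assms(1) width_ge_2 by auto
    show "1 \<le> width"
      using width_ge_2 by simp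
    show "width \<le> n" if "n \<in> {1..N} - ?S" for n
      using that by auto
    have "1 / real width \<le> 1" and "0 \<le> ?R"
      using W block_lower_nonneg[of 1] by simp_all
    then show "\<bar>\<tau>\<bar> + 1 / real width \<le> ?R + harm (width - 1)"
      using assms(2) by linarith
  qed
qed

lemma min_dist_le_inv_pow_diff_coeff_of_width:
  assumes "Suc K * width \<le> N" "real N / 2 \<le> real (K + 1) * real width"
    and "ln (2 * real (K + 1)) + \<bar>\<tau>\<bar> + 1 \<le> ln (real N)"
  shows "min_dist N \<tau> \<le> inv_pow_diff_coeff d K 1 / (real N / 4) ^ (K + 1)"
proof -
  have W: "2 \<le> real width"
    using width_ge_2 by simp
  have "width \<le> Suc K * width"
    by simp
  then have N: "0 < real N"
    using assms(1) width_ge_2 by simp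
  have "ln (real N) - ln (2 * real (K + 1)) = ln (real N / (2 * real (K + 1)))"
    using N by (subst ln_div) auto
  also have "\<dots> \<le> ln (real width)"
    using assms(2) W N by (subst ln_le_cancel_iff) (auto simp: field_simps)
  also have "\<dots> \<le> harm (width - 1)"
    using ln_le_harm[of "width - 1"] width_ge_2 by (simp add: of_nat_diff)
  finally have "\<bar>\<tau>\<bar> + 1 \<le> harm (width - 1)"
    using assms(3) by linarith
  with assms(1) have "min_dist N \<tau> \<le> block_upper K"
    by (rule min_dist_le_block_upper)
  also have "\<dots> \<le> inv_pow_diff_coeff d K 1 / (real N / 4) ^ (K + 1)"
  proof -
    have "real width \<le> real K * real width"
      using K_pos W by simp
    then have "real N / 4 \<le> real K * real width"
      using assms(2) by (simp add: algebra_simps)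
    with N K_pos width_ge_2 show ?thesis
      unfolding block_upper_def
      by (intro divide_left_mono power_mono inv_pow_diff_coeff_nonneg mult_pos_pos zero_less_power)
        auto
  qed
  finally show ?thesis .
qed

end

section \<open>Choosing the number of levels\<close>

lemma min_dist_le_inv_pow_diff_coeff:
  fixes N K :: nat
  assumes "1 \<le> K" "2 * ((K + 1) * 128 * 2 ^ K) \<le> N"
    and "ln (2 * real (K + 1)) + \<bar>\<tau>\<bar> + 1 \<le> ln (real N)"
  shows "min_dist N \<tau> \<le> inv_pow_diff_coeff 128 K 1 / (real N / 4) ^ (K + 1)"
proof -
  define D where "D = (K + 1) * 128 * 2 ^ K"
  define m where "m = N div D"
  have D: "0 < D" "2 * D \<le> N"
    using assms(2) unfolding D_def by simp_all
  then have "1 \<le> m"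
    unfolding m_def by (simp add: div_greater_zero_iff Suc_le_eq)
  interpret dyadic_layout K m 128
    using assms(1) \<open>1 \<le> m\<close> by unfold_locales auto
  have mD: "Suc K * width = m * D"
    unfolding width_def D_def by (simp add: algebra_simps)
  also have "\<dots> \<le> N"
    unfolding m_def by simp
  finally have KN: "Suc K * width \<le> N" .
  have "N < m * D + D"
    using D(1) unfolding m_def by (metis div_mult_mod_eq add_less_cancel_left mod_less_divisor mult.commute)
  then have "N \<le> 2 * (Suc K * width)"
    using D(2) unfolding mD by linarith
  then have "real N \<le> real (2 * (Suc K * width))"
    by (simp only: of_nat_le_iff)
  then have "real N / 2 \<le> real (K + 1) * real width"
    by (simp add: algebra_simps)
  from min_dist_le_inv_pow_diff_coeff_of_width[OF KN this assms(3)] show ?thesis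
    by simp
qed

lemma ln_inv_pow_diff_coeff_le:
  assumes "0 < h" "1 \<le> k"
  shows "ln (inv_pow_diff_coeff h k 1)
    \<le> real k * ln h + real k * (real k - 1) / 2 * ln 2 + real k * ln (real k)"
proof -
  have "\<Sum>{..<k} = k * (k - 1) div 2"
    by (simp add: lessThan_atLeast0 Sum_Ico_nat)
  then have "real (\<Sum>{..<k}) \<le> real k * (real k - 1) / 2"
    using of_nat_div_le_of_nat[of "k * (k - 1)" 2] assms(2) by (simp add: of_nat_diff)
  then have "real (\<Sum>{..<k}) * ln 2 \<le> real k * (real k - 1) / 2 * ln 2"
    by (rule mult_right_mono) simp
  moreover have "ln (fact k) \<le> real k * ln (real k)"
    using fact_le_power[of k, where 'a=real] assms(2) by (simp add: ln_realpow flip: ln_le_cancel_iff)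
  moreover have "ln (inv_pow_diff_coeff h k 1)
      = real k * ln h + real (\<Sum>{..<k}) * ln 2 + ln (fact k)"
    unfolding inv_pow_diff_coeff_def using assms(1) by (simp add: ln_mult ln_realpow flip: pochhammer_fact)
  ultimately show ?thesis
    by linarith
qed

lemma le_two_mul_of_le_rate:
  fixes a x k :: real
  assumes "0 < a" "a < 1" "0 \<le> x" "k \<le> a * x / ln 2"
  shows "k \<le> 2 * x"
proof -
  have "a * x / ln 2 \<le> x / ln 2"
    using assms(1-3) by (intro divide_right_mono mult_left_le_one_le) auto
  also have "\<dots> \<le> 2 * x"
  proof -
    have "1 \<le> 2 * ln (2::real)"
      using ln2_ge_two_thirds by linarith
    from mult_left_mono[OF this assms(3)] show ?thesis
      by (simp add: field_simps)
  qed
  finally show ?thesis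
    using assms(4) by simp
qed

text \<open>The quadratic \<open>k\<^sup>2 ln 2 / 2 - k x\<close> decreases up to \<open>k = x / ln 2\<close>, so on
  \<open>[a x / ln 2 - 1, a x / ln 2]\<close> it is largest at the left end.\<close>

lemma quadratic_le_at_lower_end:
  fixes a x k :: real
  assumes "0 < a" "a < 1" "0 < x" "a * x / ln 2 - 1 \<le> k" "k \<le> a * x / ln 2"
  shows "k\<^sup>2 * ln 2 / 2 - k * x \<le> - ((a - a\<^sup>2 / 2) / ln 2) * x\<^sup>2 + (1 - a) * x + ln 2 / 2"
proof -
  define l where "l = ln (2::real)"
  define k0 where "k0 = a * x / l - 1"
  have l: "0 < l"
    unfolding l_def by simp
  have k0: "k0 \<le> k"
    using assms(4) unfolding k0_def l_def .
  have kl: "k * l \<le> a * x"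
    using assms(5) l unfolding l_def by (simp add: field_simps)
  have "a * x \<le> x"
    using assms(2,3) by simp
  moreover have "k0 * l = a * x - l"
    unfolding k0_def using l by (simp add: field_simps)
  ultimately have "(k + k0) * l / 2 \<le> x"
    using kl l by (simp add: algebra_simps)
  then have "(k - k0) * ((k + k0) * l / 2 - x) \<le> 0"
    using k0 by (intro mult_nonneg_nonpos) auto
  moreover have "(k - k0) * ((k + k0) * l / 2 - x) = (k\<^sup>2 * l / 2 - k * x) - (k0\<^sup>2 * l / 2 - k0 * x)"
    by (simp add: field_simps power2_eq_square)
  moreover have "k0\<^sup>2 * l / 2 - k0 * x = - ((a - a\<^sup>2 / 2) / l) * x\<^sup>2 + (1 - a) * x + l / 2"
    unfolding k0_def using l by (simp add: field_simps power2_eq_square)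
  ultimately show ?thesis
    unfolding l_def by linarith
qed

lemma log_error_le:
  fixes a x k :: real
  assumes "0 < a" "a < 1" "1 \<le> k" "a * x / ln 2 - 1 \<le> k" "k \<le> a * x / ln 2"
  shows "k * ln 128 + k * (k - 1) / 2 * ln 2 + k * ln k - (k + 1) * (x - ln 4)
    \<le> - ((a - a\<^sup>2 / 2) / ln 2) * x\<^sup>2 + 2 * x * ln (1024 * x) + ln 8"
proof -
  define l where "l = ln (2::real)"
  have l: "2 / 3 \<le> l"
    unfolding l_def by (rule ln2_ge_two_thirds)
  have "0 < a * x / ln 2"
    using assms(3,5) by linarith
  then have x: "0 < x"
    using assms(1) by (simp add: zero_less_divide_iff zero_less_mult_iff)
  have ln_pow2: "ln (2 ^ n) = real n * l" for n :: nat
    unfolding l_def by (rule ln_realpow)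
  have "ln 128 = 7 * l" "ln 4 = 2 * l" "ln 8 = 3 * l"
    using ln_pow2[of 7] ln_pow2[of 2] ln_pow2[of 3] by simp_all
  moreover have "ln (512 * k) = 9 * l + ln k"
    using ln_pow2[of 9] assms(3) by (simp add: ln_mult)
  moreover have "k * ln (512 * k) \<le> 2 * x * ln (1024 * x)"
    using assms(3) le_two_mul_of_le_rate[OF assms(1,2) _ assms(5)] x by (intro mult_mono) auto
  moreover have "0 \<le> a * x" "0 \<le> k * l"
    using assms(1,3) x l by simp_all
  moreover have "k * ln 128 + k * (k - 1) / 2 * l + k * ln k - (k + 1) * (x - ln 4)
      = (k\<^sup>2 * l / 2 - k * x) - k * l / 2 + k * ln 128 + k * ln k + k * ln 4 - x + ln 4"
    by (simp add: field_simps power2_eq_square)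
  moreover have "k\<^sup>2 * l / 2 - k * x \<le> - ((a - a\<^sup>2 / 2) / l) * x\<^sup>2 + (1 - a) * x + l / 2"
    using quadratic_le_at_lower_end[OF assms(1,2) x assms(4,5)] unfolding l_def .
  ultimately show ?thesis
    using l unfolding l_def by (simp add: algebra_simps)
qed

lemma exists_level_count:
  fixes N :: nat and a x \<tau> :: real
  assumes x: "x = ln (real N)" and a: "0 < a" "a < 1"
    and rate: "ln 2 \<le> a * x"
    and size: "ln 256 + ln (2 * x + 1) \<le> (1 - a) * x"
    and harmonic: "ln (4 * x + 2) + \<bar>\<tau>\<bar> + 1 \<le> x"
  obtains K :: nat where "1 \<le> K" "a * x / ln 2 - 1 \<le> real K" "real K \<le> a * x / ln 2"
    "2 * ((K + 1) * 128 * 2 ^ K) \<le> N" "ln (2 * real (K + 1)) + \<bar>\<tau>\<bar> + 1 \<le> x"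
proof
  have l: "0 < ln (2::real)"
    by simp
  then have "0 < a * x"
    using rate by linarith
  then have x_pos: "0 < x"
    using a by (simp add: zero_less_mult_iff)
  then have "N \<noteq> 0"
    unfolding x by (intro notI) simp
  then have N: "real N = exp x"
    unfolding x by simp
  define K where "K = nat \<lfloor>a * x / ln 2\<rfloor>"
  have "1 \<le> a * x / ln 2"
    using rate l by (simp add: field_simps)
  then show K: "1 \<le> K" "a * x / ln 2 - 1 \<le> real K" "real K \<le> a * x / ln 2"
    unfolding K_def by linarith+
  have Kx: "real K \<le> 2 * x"
    using le_two_mul_of_le_rate[OF a _ K(3)] x_pos by simp
  have "real (2 * ((K + 1) * 128 * 2 ^ K)) = 256 * real (K + 1) * exp (real K * ln 2)"
    by (simp add: exp_of_nat_mult)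
  also have "\<dots> \<le> 256 * (2 * x + 1) * exp (a * x)"
    using Kx K(3) l by (intro mult_mono) (auto simp: field_simps)
  also have "\<dots> = exp (ln 256 + ln (2 * x + 1) + a * x)"
    using x_pos by (simp add: exp_add)
  also have "\<dots> \<le> real N"
    unfolding N using size by (simp add: algebra_simps)
  finally show "2 * ((K + 1) * 128 * 2 ^ K) \<le> N"
    by (simp only: of_nat_le_iff)
  have "ln (2 * real (K + 1)) \<le> ln (4 * x + 2)"
    using Kx by (subst ln_le_cancel_iff) auto
  then show "ln (2 * real (K + 1)) + \<bar>\<tau>\<bar> + 1 \<le> x"
    using harmonic by linarith
qed

lemma divide_power_eq_exp_ln:
  fixes c y :: real
  assumes "0 < c" "0 < y"
  shows "c / y ^ n = exp (ln c - real n * ln y)"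
  using assms by (simp add: exp_diff exp_of_nat_mult)

lemma min_dist_lt_of_log_conditions:
  fixes N :: nat and a x C \<tau> :: real
  assumes x: "x = ln (real N)" and a: "0 < a" "a < 1"
    and rate: "ln 2 \<le> a * x"
    and size: "ln 256 + ln (2 * x + 1) \<le> (1 - a) * x"
    and harmonic: "ln (4 * x + 2) + \<bar>\<tau>\<bar> + 1 \<le> x"
    and error: "2 * x * ln (1024 * x) + ln 8 < ((a - a\<^sup>2 / 2) / ln 2 - C) * x\<^sup>2"
  shows "min_dist N \<tau> < exp (- C * x\<^sup>2)"
proof -
  obtain K where K: "1 \<le> K" "a * x / ln 2 - 1 \<le> real K" "real K \<le> a * x / ln 2"
    and N: "2 * ((K + 1) * 128 * 2 ^ K) \<le> N" "ln (2 * real (K + 1)) + \<bar>\<tau>\<bar> + 1 \<le> x"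
    using exists_level_count[OF x a rate size harmonic] by blast
  have "N \<noteq> 0"
    using N(1) by (intro notI) simp
  have "min_dist N \<tau> \<le> inv_pow_diff_coeff 128 K 1 / (real N / 4) ^ (K + 1)"
    using K(1) N unfolding x by (rule min_dist_le_inv_pow_diff_coeff)
  also have "\<dots> = exp (ln (inv_pow_diff_coeff 128 K 1) - real (K + 1) * (x - ln 4))"
  proof -
    have "0 < inv_pow_diff_coeff 128 K 1"
      unfolding inv_pow_diff_coeff_def by (simp add: pochhammer_pos)
    moreover have "ln (real N / 4) = x - ln 4"
      unfolding x using \<open>N \<noteq> 0\<close> by (simp add: ln_div)
    ultimately show ?thesis
      using divide_power_eq_exp_ln[of _ "real N / 4" "K + 1"] \<open>N \<noteq> 0\<close> by simp
  qed
  also have "\<dots> < exp (- C * x\<^sup>2)"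
  proof -
    have "ln (inv_pow_diff_coeff 128 K 1) - real (K + 1) * (x - ln 4)
        \<le> real K * ln 128 + real K * (real K - 1) / 2 * ln 2 + real K * ln (real K)
          - (real K + 1) * (x - ln 4)"
      using ln_inv_pow_diff_coeff_le[of 128 K] K(1) by (simp add: algebra_simps)
    also have "\<dots> \<le> - ((a - a\<^sup>2 / 2) / ln 2) * x\<^sup>2 + 2 * x * ln (1024 * x) + ln 8"
      using K a by (intro log_error_le) auto
    also have "\<dots> < - C * x\<^sup>2"
      using error by (simp add: algebra_simps)
    finally show ?thesis
      by simp
  qed
  finally show ?thesis .
qed

lemma exists_rate_above:
  fixes C :: real
  assumes "0 < C" "C < 1 / ln 4"
  obtains a where "0 < a" "a < 1" "C < (a - a\<^sup>2 / 2) / ln 2"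
proof
  define \<eta> where "\<eta> = (1 - C * ln 4) / 2"
  have ln4: "ln (4::real) = 2 * ln 2"
    using ln_realpow[of 2 2] by simp
  have "0 < \<eta>" "\<eta> < 1 / 2"
    unfolding \<eta>_def using assms ln4 by (simp_all add: field_simps)
  then show "0 < 1 - \<eta>" "1 - \<eta> < 1"
    by simp_all
  have "C * ln 4 = 1 - 2 * \<eta>"
    unfolding \<eta>_def by (simp add: field_simps)
  also have "\<dots> < 1 - \<eta>\<^sup>2"
    using \<open>0 < \<eta>\<close> \<open>\<eta> < 1 / 2\<close> by (simp add: power2_eq_square)
  also have "\<dots> = ((1 - \<eta>) - (1 - \<eta>)\<^sup>2 / 2) / ln 2 * ln 4"
    unfolding ln4 by (simp add: field_simps power2_eq_square)
  finally show "C < ((1 - \<eta>) - (1 - \<eta>)\<^sup>2 / 2) / ln 2"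
    by (rule mult_right_less_imp_less) simp
qed

theorem theorem1p1:
  fixes \<tau> C :: real
  assumes "0 < C" and "C < 1 / ln 4"
  shows "\<exists>N0::nat. \<forall>N\<ge>N0. min_dist N \<tau> < exp (- C * (ln (real N))^2)"
proof -
  obtain a where a: "0 < a" "a < 1" and "C < (a - a\<^sup>2 / 2) / ln 2"
    using exists_rate_above assms by blast
  then have gap: "0 < (a - a\<^sup>2 / 2) / ln 2 - C"
    by simp
  let ?good = "\<lambda>x. ln 2 \<le> a * x \<and> ln 256 + ln (2 * x + 1) \<le> (1 - a) * x
    \<and> ln (4 * x + 2) + \<bar>\<tau>\<bar> + 1 \<le> x
    \<and> 2 * x * ln (1024 * x) + ln 8 < ((a - a\<^sup>2 / 2) / ln 2 - C) * x\<^sup>2"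
  have "eventually ?good at_top"
    using a gap by (intro eventually_conj; real_asymp)
  moreover have "filterlim (\<lambda>N. ln (real N)) at_top sequentially"
    by (rule filterlim_compose[OF ln_at_top filterlim_real_sequentially])
  ultimately have "eventually (\<lambda>N. ?good (ln (real N))) sequentially"
    by (rule eventually_compose_filterlim)
  then obtain N0 where "\<And>N. N0 \<le> N \<Longrightarrow> ?good (ln (real N))"
    unfolding eventually_sequentially by blast
  then show ?thesis
    using a by (blast intro: min_dist_lt_of_log_conditions[OF refl])
qed

end
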